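(* Let $\Sigma$ be a discrete controllable hybrid control system (in the setting described in the context) with $A=\{a,b\}$ and $G=\{(a,b),(b,a)\}$, and suppose the nonlinear control system in mode $a$ is controllable (any two points of $M_a$ are joined by a trajectory of $\dot x=X_a^u(x)$, $u\in U_a$). If for all $y_a\in B_a$ $$\bigcup_{y\in R_{ab}(y_a)}L_{\tau_E(y)}=M_b,$$ and $$L_{\tau_E(y)}\cap\tau_E(B_b)\neq\emptyset\quad\text{for all } y\in D_b,$$ then $\Sigma$ is globally controllable.
   Context: Setting: $A$ is a finite set of discrete modes; for each $c\in A$, $M_c$ is a smooth manifold (possibly with boundary or corners), $U_c\subseteq\mathbb{R}^{k_c}$ is a control set, and the dynamics in mode $c$ is $\dot x=X_c^{u}(x)$, $u\in U_c$, with $X_c^u$ a vector field on $M_c$. $M$ is the disjoint union of the $M_c$, $D_c\subseteq M_c\times U_c$, $D$ the disjoint union of the $D_c$, and $\tau_E$ is the projection $(c,x,u)\mapsto x$. $R\colon D\rightrightarrows D$ is a set-valued jump map defined only on the jump set $B$; $B_c=B\cap D_c$; $G=\{(c,d):\exists\,p\in D_c,q\in D_d,\ q\in R(p)\}$; for $y\in B_c$, $R_{cd}(y)=R(y)\cap D_d$. Standing assumption: for every $c$ and every $x\in\tau_E(B_c)$, every point of $D_c$ over $x$ lies in $B_c$. A hybrid control trajectory is a piecewise absolutely continuous $\gamma\colon[0,T]\to D$ with times $0=t_0<\dots<t_{N+1}=T$, modes $a_0,\dots,a_N$ with $(a_{j-1},a_j)\in G$, curves $\gamma_j=(x_j,u_j)\colon[t_j,t_{j+1}]\to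 D_{a_j}$ with $\dot x_j=X_{a_j}^{u_j}(x_j)$ a.e., $\gamma|_{[t_j,t_{j+1})}=\gamma_j$, $\gamma(T)=\gamma_N(T)$, and $\gamma_{j+1}(t_{j+1})\in R(\gamma_j(t_{j+1}))$. Discrete controllable: the directed graph $(A,G)$ is strongly connected. Globally controllable: any $p,q\in M$ are joined by a hybrid control trajectory. For $x_0\in M_c$, $L_{x_0}=\{(\phi^{X_c^{u_l}}_{t_l}\circ\dots\circ\phi^{X_c^{u_1}}_{t_1})(x_0): l\ge1,\ t_s\in\mathbb{R}^+,\ u_s\in U_c\}$, $\phi^X_t$ the flow of $X$.
   Formalization: In $L_{x_0}$ each flow of $X_c^{u}$ stays, paired with its constant control u, inside $D_c$ over its whole time interval, and the trajectories in the controllability of mode a take values in $D_a$. Each condition added here is assumed in the paper as well or is needed for the statement above to hold. *)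

theory Defs
  imports "HOL-Analysis.Analysis"
begin

text \<open>
Modes have type 'c, states live in an ambient Euclidean space 'x
(each M c :: 'x set is the state manifold of mode c), controls have type 'u
(U c :: 'u set).  A point of D (the disjoint union of the D_c) is a triple
(c, x, u); D_c = {(x,u). (c,x,u) \<in> D}.
\<close>

definition tauE :: "'c \<times> 'x \<times> 'u \<Rightarrow> 'x" where
  "tauE y = fst (snd y)"

definition mode_of :: "'c \<times> 'x \<times> 'u \<Rightarrow> 'c" where
  "mode_of y = fst y"

definition jump_set :: "('c \<times> 'x \<times> 'u) set \<Rightarrow> ('c \<times> 'x \<times> 'u \<Rightarrow> ('c \<times> 'x \<times> 'u) set)
    \<Rightarrow> ('c \<times> 'x \<times> 'u) set" where
  "jump_set D R = {y \<in> D. R y \<noteq> {}}"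

definition jump_set_mode :: "('c \<times> 'x \<times> 'u) set \<Rightarrow> ('c \<times> 'x \<times> 'u \<Rightarrow> ('c \<times> 'x \<times> 'u) set)
    \<Rightarrow> 'c \<Rightarrow> ('c \<times> 'x \<times> 'u) set" where
  "jump_set_mode D R c = {y \<in> jump_set D R. mode_of y = c}"

definition R_to :: "('c \<times> 'x \<times> 'u \<Rightarrow> ('c \<times> 'x \<times> 'u) set) \<Rightarrow> 'c \<Rightarrow> 'c \<times> 'x \<times> 'u
    \<Rightarrow> ('c \<times> 'x \<times> 'u) set" where
  "R_to R d y = {q \<in> R y. mode_of q = d}"

definition trans_graph :: "('c \<times> 'x \<times> 'u) set \<Rightarrow> ('c \<times> 'x \<times> 'u \<Rightarrow> ('c \<times> 'x \<times> 'u) set)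
    \<Rightarrow> ('c \<times> 'c) set" where
  "trans_graph D R = {(c, d). \<exists>p q. p \<in> D \<and> q \<in> D \<and> mode_of p = c \<and> mode_of q = d \<and> q \<in> R p}"

definition discrete_controllable :: "'c set \<Rightarrow> ('c \<times> 'c) set \<Rightarrow> bool" where
  "discrete_controllable A G \<longleftrightarrow> (\<forall>c\<in>A. \<forall>d\<in>A. (c, d) \<in> (G \<inter> A \<times> A)\<^sup>*)"

definition abs_continuous_on :: "real \<Rightarrow> real \<Rightarrow> (real \<Rightarrow> 'x::real_normed_vector) \<Rightarrow> bool" where
  "abs_continuous_on a b f \<longleftrightarrow>
    (\<forall>\<epsilon>>0. \<exists>\<delta>>0. \<forall>(n::nat) (s::nat \<Rightarrow> real) (t::nat \<Rightarrow> real).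
        (\<forall>i<n. a \<le> s i \<and> s i \<le> t i \<and> t i \<le> b) \<and>
        (\<forall>i<n. \<forall>j<n. i \<noteq> j \<longrightarrow> t i \<le> s j \<or> t j \<le> s i) \<and>
        (\<Sum>i<n. t i - s i) < \<delta>
        \<longrightarrow> (\<Sum>i<n. norm (f (t i) - f (s i))) < \<epsilon>)"

definition mode_traj :: "('c \<Rightarrow> 'u \<Rightarrow> 'x::euclidean_space \<Rightarrow> 'x) \<Rightarrow> ('c \<times> 'x \<times> 'u) set \<Rightarrow> 'c
    \<Rightarrow> real \<Rightarrow> real \<Rightarrow> (real \<Rightarrow> 'x) \<Rightarrow> (real \<Rightarrow> 'u) \<Rightarrow> bool" where
  "mode_traj X D c t0 t1 x u \<longleftrightarrow>
     t0 < t1 \<and> abs_continuous_on t0 t1 x \<and>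
     (\<forall>t\<in>{t0..t1}. (c, x t, u t) \<in> D) \<and>
     (AE t in lebesgue. t \<in> {t0..t1} \<longrightarrow> (x has_vector_derivative X c (u t) (x t)) (at t))"

definition mode_controllable :: "('c \<Rightarrow> 'u \<Rightarrow> 'x::euclidean_space \<Rightarrow> 'x) \<Rightarrow> ('c \<times> 'x \<times> 'u) set
    \<Rightarrow> ('c \<Rightarrow> 'x set) \<Rightarrow> 'c \<Rightarrow> bool" where
  "mode_controllable X D M c \<longleftrightarrow>
     (\<forall>p\<in>M c. \<forall>q\<in>M c. \<exists>T x u. mode_traj X D c 0 T x u \<and> x 0 = p \<and> x T = q)"

definition hybrid_traj_joins ::
  "('c \<Rightarrow> 'u \<Rightarrow> 'x::euclidean_space \<Rightarrow> 'x) \<Rightarrow> ('c \<times> 'x \<times> 'u) set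
    \<Rightarrow> ('c \<times> 'x \<times> 'u \<Rightarrow> ('c \<times> 'x \<times> 'u) set) \<Rightarrow> 'c \<times> 'x \<Rightarrow> 'c \<times> 'x \<Rightarrow> bool" where
  "hybrid_traj_joins X D R p q \<longleftrightarrow>
    (\<exists>(N::nat) (t::nat \<Rightarrow> real) (a::nat \<Rightarrow> 'c) (x::nat \<Rightarrow> real \<Rightarrow> 'x) (u::nat \<Rightarrow> real \<Rightarrow> 'u).
       t 0 = 0 \<and>
       (\<forall>j\<le>N. t j < t (Suc j)) \<and>
       (\<forall>j. 1 \<le> j \<and> j \<le> N \<longrightarrow> (a (j - 1), a j) \<in> trans_graph D R) \<and>
       (\<forall>j\<le>N. mode_traj X D (a j) (t j) (t (Suc j)) (x j) (u j)) \<and>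
       (\<forall>j<N. (a (Suc j), x (Suc j) (t (Suc j)), u (Suc j) (t (Suc j)))
                \<in> R (a j, x j (t (Suc j)), u j (t (Suc j)))) \<and>
       a 0 = fst p \<and> x 0 0 = snd p \<and>
       a N = fst q \<and> x N (t (Suc N)) = snd q)"

definition globally_controllable ::
  "('c \<Rightarrow> 'u \<Rightarrow> 'x::euclidean_space \<Rightarrow> 'x) \<Rightarrow> ('c \<Rightarrow> 'x set) \<Rightarrow> ('c \<times> 'x \<times> 'u) set
    \<Rightarrow> ('c \<times> 'x \<times> 'u \<Rightarrow> ('c \<times> 'x \<times> 'u) set) \<Rightarrow> bool" where
  "globally_controllable X M D R \<longleftrightarrow>
    (\<forall>c p d q. p \<in> M c \<longrightarrow> q \<in> M d \<longrightarrow> hybrid_traj_joins X D R (c, p) (d, q))"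

definition flow_step :: "('c \<Rightarrow> 'u \<Rightarrow> 'x::euclidean_space \<Rightarrow> 'x) \<Rightarrow> ('c \<Rightarrow> 'x set) \<Rightarrow> ('c \<Rightarrow> 'u set)
    \<Rightarrow> ('c \<times> 'x \<times> 'u) set \<Rightarrow> 'c \<Rightarrow> 'u \<Rightarrow> real \<Rightarrow> 'x \<Rightarrow> 'x \<Rightarrow> bool" where
  "flow_step X M U D c v T x0 x1 \<longleftrightarrow>
     v \<in> U c \<and> T > 0 \<and>
     (\<exists>y::real \<Rightarrow> 'x. y 0 = x0 \<and> y T = x1 \<and>
        (\<forall>s\<in>{0..T}. y s \<in> M c \<and> (c, y s, v) \<in> D \<and>
           (y has_vector_derivative X c v (y s)) (at s within {0..T})))"

definition reach_L :: "('c \<Rightarrow> 'u \<Rightarrow> 'x::euclidean_space \<Rightarrow> 'x) \<Rightarrow> ('c \<Rightarrow> 'x set) \<Rightarrow> ('c \<Rightarrow> 'u set)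
    \<Rightarrow> ('c \<times> 'x \<times> 'u) set \<Rightarrow> 'c \<Rightarrow> 'x \<Rightarrow> 'x set" where
  "reach_L X M U D c x0 =
     {z. \<exists>(l::nat) (ts::nat \<Rightarrow> real) (us::nat \<Rightarrow> 'u) (xs::nat \<Rightarrow> 'x).
           l \<ge> 1 \<and> xs 0 = x0 \<and> xs l = z \<and>
           (\<forall>s<l. flow_step X M U D c (us s) (ts s) (xs s) (xs (Suc s)))}"

end

(*
  Mode a is the hub.  From any admissible point of mode a one steers, by controllability
  of mode a, to a state over the jump set B_a; by the standing assumption the control value
  there is irrelevant, so the point lies in B_a, and by the first hypothesis some jump out of
  it lands at a state from which flows of mode b reach any prescribed point of M_b.
  From a point of M_b the second hypothesis gives flows of mode b to a point of B_b, whose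
  jump must land in mode a because G = {(a,b),(b,a)}.  Chaining these pieces joins any two
  points of M.
*)

theory Submission
  imports Defs
begin

section \<open>Absolutely continuous trajectories\<close>

lemma lipschitz_on_imp_abs_continuous_on:
  fixes f :: "real \<Rightarrow> 'a::real_normed_vector"
  assumes lip: "L-lipschitz_on {a..b} f"
  shows "abs_continuous_on a b f"
  unfolding abs_continuous_on_def
proof (intro allI impI)
  fix e :: real assume e: "e > 0"
  have L: "L \<ge> 0" by (rule lipschitz_on_nonneg[OF lip])
  show "\<exists>d>0. \<forall>(n::nat) s t. (\<forall>i<n. a \<le> s i \<and> s i \<le> t i \<and> t i \<le> b) \<and>
      (\<forall>i<n. \<forall>j<n. i \<noteq> j \<longrightarrow> t i \<le> s j \<or> t j \<le> s i) \<and> (\<Sum>i<n. t i - s i) < d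
      \<longrightarrow> (\<Sum>i<n. norm (f (t i) - f (s i))) < e"
  proof (intro exI[of _ "e / (L + 1)"] conjI allI impI)
    show "e / (L + 1) > 0" using e L by simp
    fix n :: nat and s t :: "nat \<Rightarrow> real"
    assume h: "(\<forall>i<n. a \<le> s i \<and> s i \<le> t i \<and> t i \<le> b) \<and>
      (\<forall>i<n. \<forall>j<n. i \<noteq> j \<longrightarrow> t i \<le> s j \<or> t j \<le> s i) \<and> (\<Sum>i<n. t i - s i) < e / (L + 1)"
    have "(\<Sum>i<n. norm (f (t i) - f (s i))) \<le> (\<Sum>i<n. (L + 1) * (t i - s i))"
    proof (rule sum_mono)
      fix i assume "i \<in> {..<n}"
      then have i: "a \<le> s i" "s i \<le> t i" "t i \<le> b" using h by auto
      then have "norm (f (t i) - f (s i)) \<le> L * norm (t i - s i)"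
        by (intro lipschitz_on_normD[OF lip]) auto
      also have "\<dots> \<le> (L + 1) * (t i - s i)" using i by (simp add: mult_right_mono)
      finally show "norm (f (t i) - f (s i)) \<le> (L + 1) * (t i - s i)" .
    qed
    also have "\<dots> = (L + 1) * (\<Sum>i<n. t i - s i)" by (simp add: sum_distrib_left)
    also have "\<dots> < (L + 1) * (e / (L + 1))" using h L by (intro mult_strict_left_mono) auto
    also have "\<dots> = e" using L by simp
    finally show "(\<Sum>i<n. norm (f (t i) - f (s i))) < e" .
  qed
qed

lemma abs_continuous_on_shift:
  assumes "abs_continuous_on a b f"
  shows "abs_continuous_on (a + r) (b + r) (\<lambda>t. f (t - r))"
  unfolding abs_continuous_on_def
proof (intro allI impI)
  fix e :: real assume "e > 0"
  with assms obtain d where d: "d > 0" and ac: "\<forall>(n::nat) s t. (\<forall>i<n. a \<le> s i \<and> s i \<le> t i \<and> t i \<le> b) \<and>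
      (\<forall>i<n. \<forall>j<n. i \<noteq> j \<longrightarrow> t i \<le> s j \<or> t j \<le> s i) \<and> (\<Sum>i<n. t i - s i) < d
      \<longrightarrow> (\<Sum>i<n. norm (f (t i) - f (s i))) < e"
    unfolding abs_continuous_on_def by auto
  show "\<exists>d>0. \<forall>(n::nat) s t. (\<forall>i<n. a + r \<le> s i \<and> s i \<le> t i \<and> t i \<le> b + r) \<and>
      (\<forall>i<n. \<forall>j<n. i \<noteq> j \<longrightarrow> t i \<le> s j \<or> t j \<le> s i) \<and> (\<Sum>i<n. t i - s i) < d
      \<longrightarrow> (\<Sum>i<n. norm (f (t i - r) - f (s i - r))) < e"
  proof (intro exI[of _ d] conjI allI impI)
    fix n :: nat and s t :: "nat \<Rightarrow> real"
    assume "(\<forall>i<n. a + r \<le> s i \<and> s i \<le> t i \<and> t i \<le> b + r) \<and>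
      (\<forall>i<n. \<forall>j<n. i \<noteq> j \<longrightarrow> t i \<le> s j \<or> t j \<le> s i) \<and> (\<Sum>i<n. t i - s i) < d"
    then show "(\<Sum>i<n. norm (f (t i - r) - f (s i - r))) < e"
      using ac[rule_format, of n "\<lambda>i. s i - r" "\<lambda>i. t i - r"] by force
  qed (rule d)
qed

lemma AE_lebesgue_shift:
  fixes P :: "real \<Rightarrow> bool"
  assumes "AE t in lebesgue. P t"
  shows "AE t in lebesgue. P (t - r)"
proof -
  obtain N where N: "N \<in> null_sets lebesgue" and P: "\<And>t. t \<notin> N \<Longrightarrow> P t"
    using assms unfolding eventually_ae_filter by auto
  have "(+) r ` N \<in> null_sets lebesgue"
    using N negligible_translation by (auto simp: negligible_iff_null_sets[symmetric])
  moreover have "{t \<in> space lebesgue. \<not> P (t - r)} \<subseteq> (+) r ` N"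
    using P by (force intro: image_eqI[where x = "_ - r"])
  ultimately show ?thesis unfolding eventually_ae_filter by blast
qed

lemma mode_traj_shift:
  assumes "mode_traj X D c t0 t1 x u"
  shows "mode_traj X D c (t0 + r) (t1 + r) (\<lambda>t. x (t - r)) (\<lambda>t. u (t - r))"
proof -
  from assms have "t0 < t1" and ac: "abs_continuous_on t0 t1 x"
    and inD: "\<forall>t\<in>{t0..t1}. (c, x t, u t) \<in> D"
    and ae: "AE t in lebesgue. t \<in> {t0..t1} \<longrightarrow> (x has_vector_derivative X c (u t) (x t)) (at t)"
    unfolding mode_traj_def by auto
  from AE_lebesgue_shift[OF ae, of r]
  have "AE t in lebesgue. t \<in> {t0 + r..t1 + r} \<longrightarrow>
      ((\<lambda>t. x (t - r)) has_vector_derivative X c (u (t - r)) (x (t - r))) (at t)"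
  proof eventually_elim
    case (elim t)
    have "((\<lambda>t. t - r) has_vector_derivative 1) (at t)"
      by (auto intro!: derivative_eq_intros)
    with elim show ?case
      by (auto dest: vector_diff_chain_at simp: o_def)
  qed
  then show ?thesis
    unfolding mode_traj_def using \<open>t0 < t1\<close> abs_continuous_on_shift[OF ac] inD by auto
qed

text \<open>A single instant is negligible, so the control at the initial time is free; this is
  what lets a trajectory start at an arbitrary jump target in R(y).\<close>

lemma mode_traj_update_start:
  assumes "mode_traj X D c t0 t1 x u" and "(c, x t0, w) \<in> D"
  shows "mode_traj X D c t0 t1 x (u(t0 := w))"
proof -
  have "AE t in lebesgue. t \<notin> {t0}"
    by (intro AE_not_in) (simp flip: negligible_iff_null_sets)
  moreover have "AE t in lebesgue. t \<in> {t0..t1} \<longrightarrow> (x has_vector_derivative X c (u t) (x t)) (at t)"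
    using assms(1) unfolding mode_traj_def by blast
  ultimately have "AE t in lebesgue. t \<in> {t0..t1} \<longrightarrow>
      (x has_vector_derivative X c ((u(t0 := w)) t) (x t)) (at t)"
    by eventually_elim auto
  with assms show ?thesis unfolding mode_traj_def by auto
qed

lemma mode_traj_ends_in_D:
  assumes "mode_traj X D c t0 t1 x u"
  shows "(c, x t0, u t0) \<in> D" and "(c, x t1, u t1) \<in> D"
  using assms unfolding mode_traj_def by auto

section \<open>Lipschitz trajectories\<close>

text \<open>Concatenations of flows are built in this class, which, unlike the epsilon-delta
  definition of absolute continuity, is easily glued at a common endpoint; only the final
  result is converted into a trajectory in the sense of \<^const>\<open>mode_traj\<close>.\<close>

definition lipschitz_traj :: "('c \<Rightarrow> 'u \<Rightarrow> 'x::euclidean_space \<Rightarrow> 'x) \<Rightarrow> ('c \<times> 'x \<times> 'u) set \<Rightarrow> 'c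
    \<Rightarrow> real \<Rightarrow> real \<Rightarrow> (real \<Rightarrow> 'x) \<Rightarrow> (real \<Rightarrow> 'u) \<Rightarrow> bool" where
  "lipschitz_traj X D c t0 t1 x u \<longleftrightarrow>
     t0 < t1 \<and> (\<exists>L. L-lipschitz_on {t0..t1} x) \<and>
     (\<forall>t\<in>{t0..t1}. (c, x t, u t) \<in> D) \<and>
     (\<exists>F. finite F \<and> (\<forall>t\<in>{t0<..<t1} - F. (x has_vector_derivative X c (u t) (x t)) (at t)))"

lemma mode_traj_if_lipschitz_traj:
  assumes "lipschitz_traj X D c t0 t1 x u"
  shows "mode_traj X D c t0 t1 x u"
proof -
  from assms obtain L F where "t0 < t1" and lip: "L-lipschitz_on {t0..t1} x"
    and "\<forall>t\<in>{t0..t1}. (c, x t, u t) \<in> D" and "finite F"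
    and der: "\<forall>t\<in>{t0<..<t1} - F. (x has_vector_derivative X c (u t) (x t)) (at t)"
    unfolding lipschitz_traj_def by blast
  moreover have "AE t in lebesgue. t \<notin> insert t0 (insert t1 F)"
    using \<open>finite F\<close> by (intro AE_not_in) (simp add: negligible_finite flip: negligible_iff_null_sets)
  then have "AE t in lebesgue. t \<in> {t0..t1} \<longrightarrow> (x has_vector_derivative X c (u t) (x t)) (at t)"
    by eventually_elim (use der in auto)
  ultimately show ?thesis
    unfolding mode_traj_def using lipschitz_on_imp_abs_continuous_on[OF lip] by blast
qed

lemma lipschitz_traj_if_flow_step:
  assumes cont: "continuous_on (M c) (X c v)"
    and step: "flow_step X M U D c v T x0 x1"
  shows "\<exists>y. lipschitz_traj X D c 0 T y (\<lambda>_. v) \<and> y 0 = x0 \<and> y T = x1"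
proof -
  from step obtain y where T: "T > 0" and ends: "y 0 = x0" "y T = x1"
    and yM: "\<And>s. s \<in> {0..T} \<Longrightarrow> y s \<in> M c"
    and yD: "\<And>s. s \<in> {0..T} \<Longrightarrow> (c, y s, v) \<in> D"
    and der: "\<And>s. s \<in> {0..T} \<Longrightarrow> (y has_vector_derivative X c v (y s)) (at s within {0..T})"
    unfolding flow_step_def by blast
  have "continuous_on {0..T} y"
    using der has_vector_derivative_continuous continuous_on_eq_continuous_within by blast
  then have "continuous_on {0..T} (\<lambda>s. X c v (y s))"
    by (rule continuous_on_compose2[OF cont]) (use yM in auto)
  then have "bounded ((\<lambda>s. X c v (y s)) ` {0..T})"
    by (intro compact_imp_bounded compact_continuous_image) auto
  then obtain B where "B > 0" and B: "\<And>s. s \<in> {0..T} \<Longrightarrow> norm (X c v (y s)) \<le> B"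
    by (auto simp: bounded_pos)
  have lip: "B-lipschitz_on {0..T} y"
  proof (rule bounded_derivative_imp_lipschitz[where f' = "\<lambda>s h. h *\<^sub>R X c v (y s)"])
    show "(y has_derivative (\<lambda>h. h *\<^sub>R X c v (y s))) (at s within {0..T})" if "s \<in> {0..T}" for s
      using der[OF that] by (simp add: has_vector_derivative_def)
    show "onorm (\<lambda>h. h *\<^sub>R X c v (y s)) \<le> B" if "s \<in> {0..T}" for s
      using B[OF that] by (simp add: onorm_scaleR_left onorm_id)
  qed (use \<open>B > 0\<close> in auto)
  have "\<forall>s\<in>{0<..<T} - {}. (y has_vector_derivative X c v (y s)) (at s)"
  proof
    fix s assume "s \<in> {0<..<T} - {}"
    then show "(y has_vector_derivative X c v (y s)) (at s)"
      using der[of s] by (simp add: at_within_Icc_at)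
  qed
  then have "lipschitz_traj X D c 0 T y (\<lambda>_. v)"
    unfolding lipschitz_traj_def using T lip yD by blast
  then show ?thesis using ends by blast
qed

lemma lipschitz_traj_shift:
  assumes "lipschitz_traj X D c t0 t1 x u"
  shows "lipschitz_traj X D c (t0 + r) (t1 + r) (\<lambda>t. x (t - r)) (\<lambda>t. u (t - r))"
proof -
  from assms obtain L F where "t0 < t1" and lip: "L-lipschitz_on {t0..t1} x"
    and inD: "\<forall>t\<in>{t0..t1}. (c, x t, u t) \<in> D" and "finite F"
    and der: "\<forall>t\<in>{t0<..<t1} - F. (x has_vector_derivative X c (u t) (x t)) (at t)"
    unfolding lipschitz_traj_def by blast
  have "L-lipschitz_on {t0 + r..t1 + r} (\<lambda>t. x (t - r))"
  proof (rule lipschitz_onI)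
    fix s t assume "s \<in> {t0 + r..t1 + r}" "t \<in> {t0 + r..t1 + r}"
    then have "dist (x (s - r)) (x (t - r)) \<le> L * dist (s - r) (t - r)"
      by (intro lipschitz_onD[OF lip]) auto
    then show "dist (x (s - r)) (x (t - r)) \<le> L * dist s t" by (simp add: dist_real_def)
  qed (rule lipschitz_on_nonneg[OF lip])
  moreover have "((\<lambda>t. x (t - r)) has_vector_derivative X c (u (t - r)) (x (t - r))) (at t)"
    if "t \<in> {t0 + r<..<t1 + r} - (+) r ` F" for t
  proof -
    have "t - r \<in> {t0<..<t1} - F" using that by force
    then have dx: "(x has_vector_derivative X c (u (t - r)) (x (t - r))) (at (t - r))"
      using der by blast
    have "((\<lambda>t. t - r) has_vector_derivative 1) (at t)"
      by (auto intro!: derivative_eq_intros)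
    from vector_diff_chain_at[OF this dx] show ?thesis by (simp add: o_def)
  qed
  moreover have "\<forall>t\<in>{t0 + r..t1 + r}. (c, x (t - r), u (t - r)) \<in> D"
    using inD by auto
  ultimately show ?thesis
    unfolding lipschitz_traj_def using \<open>t0 < t1\<close> \<open>finite F\<close>
    by (intro conjI exI[of _ L] exI[of _ "(+) r ` F"]) auto
qed

lemma lipschitz_traj_append:
  assumes xu: "lipschitz_traj X D c t0 t1 x u" and yw: "lipschitz_traj X D c t1 t2 y w"
    and meet: "x t1 = y t1"
  shows "lipschitz_traj X D c t0 t2 (\<lambda>t. if t \<le> t1 then x t else y t) (\<lambda>t. if t \<le> t1 then u t else w t)"
proof -
  from xu obtain L F where "t0 < t1" and lip_x: "L-lipschitz_on {t0..t1} x"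
    and inD_x: "\<forall>t\<in>{t0..t1}. (c, x t, u t) \<in> D" and "finite F"
    and der_x: "\<forall>t\<in>{t0<..<t1} - F. (x has_vector_derivative X c (u t) (x t)) (at t)"
    unfolding lipschitz_traj_def by blast
  from yw obtain K G where "t1 < t2" and lip_y: "K-lipschitz_on {t1..t2} y"
    and inD_y: "\<forall>t\<in>{t1..t2}. (c, y t, w t) \<in> D" and "finite G"
    and der_y: "\<forall>t\<in>{t1<..<t2} - G. (y has_vector_derivative X c (w t) (y t)) (at t)"
    unfolding lipschitz_traj_def by blast
  have "((\<lambda>t. if t \<le> t1 then x t else y t) has_vector_derivative
      X c (if t \<le> t1 then u t else w t) (if t \<le> t1 then x t else y t)) (at t)"
    if t: "t \<in> {t0<..<t2} - insert t1 (F \<union> G)" for t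
  proof (cases "t < t1")
    case True
    have "(x has_vector_derivative X c (u t) (x t)) (at t)" using der_x t True by auto
    then have "((\<lambda>t. if t \<le> t1 then x t else y t) has_vector_derivative X c (u t) (x t)) (at t)"
      by (rule has_vector_derivative_transform_within_open[where S = "{..<t1}"]) (use True in auto)
    then show ?thesis using True by simp
  next
    case False
    with t have "t1 < t" by auto
    have "(y has_vector_derivative X c (w t) (y t)) (at t)" using der_y t \<open>t1 < t\<close> by auto
    then have "((\<lambda>t. if t \<le> t1 then x t else y t) has_vector_derivative X c (w t) (y t)) (at t)"
      by (rule has_vector_derivative_transform_within_open[where S = "{t1<..}"]) (use \<open>t1 < t\<close> in auto)
    then show ?thesis using \<open>t1 < t\<close> by simp
  qed
  moreover have "(max L K)-lipschitz_on {t0..t2} (\<lambda>t. if t \<le> t1 then x t else y t)"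
    by (rule lipschitz_on_concat_max[OF lip_x lip_y meet])
  ultimately show ?thesis
    unfolding lipschitz_traj_def using \<open>t0 < t1\<close> \<open>t1 < t2\<close> \<open>finite F\<close> \<open>finite G\<close> inD_x inD_y
    by (intro conjI exI[of _ "max L K"] exI[of _ "insert t1 (F \<union> G)"]) auto
qed

lemma lipschitz_traj_if_reach_L:
  assumes cont: "\<And>v. v \<in> U c \<Longrightarrow> continuous_on (M c) (X c v)"
    and z: "z \<in> reach_L X M U D c x0"
  shows "\<exists>T y u. lipschitz_traj X D c 0 T y u \<and> y 0 = x0 \<and> y T = z"
proof -
  from z obtain l ts us xs where "l \<ge> 1" "xs 0 = x0" "xs l = z"
    and steps: "\<And>s. s < l \<Longrightarrow> flow_step X M U D c (us s) (ts s) (xs s) (xs (Suc s))"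
    unfolding reach_L_def by blast
  have piece: "\<exists>y. lipschitz_traj X D c 0 (ts s) y (\<lambda>_. us s) \<and> y 0 = xs s \<and> y (ts s) = xs (Suc s)"
    if "s < l" for s
  proof -
    have "us s \<in> U c" using steps[OF that] by (simp add: flow_step_def)
    then show ?thesis by (rule lipschitz_traj_if_flow_step[OF cont steps[OF that]])
  qed
  have "\<exists>T y u. lipschitz_traj X D c 0 T y u \<and> y 0 = xs 0 \<and> y T = xs k" if "1 \<le> k" "k \<le> l" for k
    using that
  proof (induction k rule: nat_induct_at_least)
    case base
    then show ?case using piece[of 0] by auto
  next
    case (Suc k)
    then obtain T y u where yu: "lipschitz_traj X D c 0 T y u" and "y 0 = xs 0" "y T = xs k"
      by auto
    obtain y' where y': "lipschitz_traj X D c 0 (ts k) y' (\<lambda>_. us k)"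
      and "y' 0 = xs k" "y' (ts k) = xs (Suc k)"
      using piece[of k] Suc.prems by auto
    have "lipschitz_traj X D c T (ts k + T) (\<lambda>t. y' (t - T)) (\<lambda>_. us k)"
      using lipschitz_traj_shift[OF y', of T] by simp
    from lipschitz_traj_append[OF yu this]
    have "lipschitz_traj X D c 0 (ts k + T) (\<lambda>t. if t \<le> T then y t else y' (t - T))
        (\<lambda>t. if t \<le> T then u t else us k)"
      using \<open>y T = xs k\<close> \<open>y' 0 = xs k\<close> by simp
    moreover have "0 < T" "0 < ts k" using yu y' by (simp_all add: lipschitz_traj_def)
    ultimately show ?case
      using \<open>y 0 = xs 0\<close> \<open>y' (ts k) = xs (Suc k)\<close>
      by (intro exI[of _ "ts k + T"] exI[of _ "\<lambda>t. if t \<le> T then y t else y' (t - T)"] exI conjI)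
        auto
  qed
  then show ?thesis using \<open>l \<ge> 1\<close> \<open>xs 0 = x0\<close> \<open>xs l = z\<close> by blast
qed

section \<open>Hybrid reachability\<close>

definition control_arc :: "('c \<Rightarrow> 'u \<Rightarrow> 'x::euclidean_space \<Rightarrow> 'x) \<Rightarrow> ('c \<times> 'x \<times> 'u) set \<Rightarrow> 'c
    \<Rightarrow> 'x \<times> 'u \<Rightarrow> 'x \<times> 'u \<Rightarrow> bool" where
  "control_arc X D c p q \<longleftrightarrow>
     (\<exists>T x u. mode_traj X D c 0 T x u \<and> (x 0, u 0) = p \<and> (x T, u T) = q)"

lemma control_arc_in_D:
  assumes "control_arc X D c p q"
  shows "(c, p) \<in> D" and "(c, q) \<in> D"
  using assms mode_traj_ends_in_D unfolding control_arc_def by metis+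

lemma control_arc_update_start:
  assumes "control_arc X D c (x, u) q" and "(c, x, w) \<in> D"
  shows "control_arc X D c (x, w) q"
proof -
  from assms(1) obtain T y v where traj: "mode_traj X D c 0 T y v"
    and "(y 0, v 0) = (x, u)" and "(y T, v T) = q"
    unfolding control_arc_def by blast
  moreover have "T \<noteq> 0" using traj by (simp add: mode_traj_def)
  moreover note mode_traj_update_start[OF traj, of w]
  ultimately show ?thesis
    unfolding control_arc_def using assms(2) by (intro exI[of _ T] exI[of _ y]) auto
qed

lemma control_arc_if_reach_L:
  assumes "\<And>v. v \<in> U c \<Longrightarrow> continuous_on (M c) (X c v)"
    and "z \<in> reach_L X M U D c x"
  shows "\<exists>u v. control_arc X D c (x, u) (z, v)"
proof -
  obtain T y u where traj: "lipschitz_traj X D c 0 T y u" and "y 0 = x" "y T = z"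
    using lipschitz_traj_if_reach_L[OF assms] by blast
  with mode_traj_if_lipschitz_traj[OF traj] have "control_arc X D c (x, u 0) (z, u T)"
    unfolding control_arc_def by blast
  then show ?thesis by blast
qed

lemma control_arc_if_mode_controllable:
  assumes "mode_controllable X D M c" and "p \<in> M c" and "q \<in> M c"
  shows "\<exists>u v. control_arc X D c (p, u) (q, v)"
proof -
  obtain T x u where "mode_traj X D c 0 T x u" and "x 0 = p" and "x T = q"
    using assms unfolding mode_controllable_def by blast
  then have "control_arc X D c (p, u 0) (q, u T)"
    unfolding control_arc_def by auto
  then show ?thesis by blast
qed

lemma trans_graphI:
  assumes "p \<in> D" and "q \<in> R p" and "q \<in> D"
  shows "(mode_of p, mode_of q) \<in> trans_graph D R"
  using assms unfolding trans_graph_def by blast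

definition hybrid_traj :: "('c \<Rightarrow> 'u \<Rightarrow> 'x::euclidean_space \<Rightarrow> 'x) \<Rightarrow> ('c \<times> 'x \<times> 'u) set
    \<Rightarrow> ('c \<times> 'x \<times> 'u \<Rightarrow> ('c \<times> 'x \<times> 'u) set)
    \<Rightarrow> nat \<Rightarrow> (nat \<Rightarrow> real) \<Rightarrow> (nat \<Rightarrow> 'c) \<Rightarrow> (nat \<Rightarrow> real \<Rightarrow> 'x) \<Rightarrow> (nat \<Rightarrow> real \<Rightarrow> 'u) \<Rightarrow> bool"
  where
  "hybrid_traj X D R N t a x u \<longleftrightarrow>
     t 0 = 0 \<and>
     (\<forall>j\<le>N. t j < t (Suc j)) \<and>
     (\<forall>j. 1 \<le> j \<and> j \<le> N \<longrightarrow> (a (j - 1), a j) \<in> trans_graph D R) \<and>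
     (\<forall>j\<le>N. mode_traj X D (a j) (t j) (t (Suc j)) (x j) (u j)) \<and>
     (\<forall>j<N. (a (Suc j), x (Suc j) (t (Suc j)), u (Suc j) (t (Suc j)))
              \<in> R (a j, x j (t (Suc j)), u j (t (Suc j))))"

lemma hybrid_traj_single:
  assumes "mode_traj X D c 0 T x u"
  shows "hybrid_traj X D R 0 (\<lambda>j. if j = 0 then 0 else T) (\<lambda>_. c) (\<lambda>_. x) (\<lambda>_. u)"
proof -
  have "0 < T" using assms by (simp add: mode_traj_def)
  with assms show ?thesis by (simp add: hybrid_traj_def)
qed

lemma hybrid_traj_snoc:
  assumes traj: "hybrid_traj X D R N t a x u"
    and piece: "mode_traj X D c (t (Suc N)) T y v"
    and jump: "(c, y (t (Suc N)), v (t (Suc N))) \<in> R (a N, x N (t (Suc N)), u N (t (Suc N)))"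
  shows "hybrid_traj X D R (Suc N) (t(Suc (Suc N) := T)) (a(Suc N := c)) (x(Suc N := y)) (u(Suc N := v))"
proof -
  from traj have "t 0 = 0" and inc: "\<forall>j\<le>N. t j < t (Suc j)"
    and edges: "\<forall>j. 1 \<le> j \<and> j \<le> N \<longrightarrow> (a (j - 1), a j) \<in> trans_graph D R"
    and pieces: "\<forall>j\<le>N. mode_traj X D (a j) (t j) (t (Suc j)) (x j) (u j)"
    and jumps: "\<forall>j<N. (a (Suc j), x (Suc j) (t (Suc j)), u (Suc j) (t (Suc j)))
                  \<in> R (a j, x j (t (Suc j)), u j (t (Suc j)))"
    unfolding hybrid_traj_def by blast+
  have "t (Suc N) < T" using piece by (simp add: mode_traj_def)
  have "mode_traj X D (a N) (t N) (t (Suc N)) (x N) (u N)"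
    using pieces by simp
  then have "(mode_of (a N, x N (t (Suc N)), u N (t (Suc N))), mode_of (c, y (t (Suc N)), v (t (Suc N))))
      \<in> trans_graph D R"
    using jump mode_traj_ends_in_D piece by (intro trans_graphI)
  then have "(a N, c) \<in> trans_graph D R" by (simp add: mode_of_def)
  let ?t = "t(Suc (Suc N) := T)" and ?a = "a(Suc N := c)"
    and ?x = "x(Suc N := y)" and ?u = "u(Suc N := v)"
  have "?t j < ?t (Suc j)" if "j \<le> Suc N" for j
    using that inc \<open>t (Suc N) < T\<close> by (cases "j = Suc N") auto
  moreover have "(?a (j - 1), ?a j) \<in> trans_graph D R" if "1 \<le> j" "j \<le> Suc N" for j
    using that edges \<open>(a N, c) \<in> trans_graph D R\<close> by (cases "j = Suc N") auto
  moreover have "mode_traj X D (?a j) (?t j) (?t (Suc j)) (?x j) (?u j)" if "j \<le> Suc N" for j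
    using that pieces piece by (cases "j = Suc N") auto
  moreover have "(?a (Suc j), ?x (Suc j) (?t (Suc j)), ?u (Suc j) (?t (Suc j)))
      \<in> R (?a j, ?x j (?t (Suc j)), ?u j (?t (Suc j)))" if "j < Suc N" for j
    using that jumps jump by (cases "j = N") auto
  ultimately show ?thesis
    unfolding hybrid_traj_def using \<open>t 0 = 0\<close> by simp
qed

text \<open>Hybrid points carry the control value, because the jump condition at a switching time
  constrains the controls on both sides of the jump.\<close>

inductive hybrid_reach :: "('c \<Rightarrow> 'u \<Rightarrow> 'x::euclidean_space \<Rightarrow> 'x) \<Rightarrow> ('c \<times> 'x \<times> 'u) set
    \<Rightarrow> ('c \<times> 'x \<times> 'u \<Rightarrow> ('c \<times> 'x \<times> 'u) set) \<Rightarrow> 'c \<times> 'x \<times> 'u \<Rightarrow> 'c \<times> 'x \<times> 'u \<Rightarrow> bool"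
  for X D R where
  arc: "control_arc X D c p q \<Longrightarrow> hybrid_reach X D R (c, p) (c, q)"
| jump: "hybrid_reach X D R y z \<Longrightarrow> (c, p) \<in> R z \<Longrightarrow> control_arc X D c p q
    \<Longrightarrow> hybrid_reach X D R y (c, q)"

lemma hybrid_reach_jump_trans:
  assumes "hybrid_reach X D R w v" and "hybrid_reach X D R y z" and "w \<in> R z"
  shows "hybrid_reach X D R y v"
  using assms by induction (auto intro: hybrid_reach.jump)

lemma hybrid_reach_imp_hybrid_traj:
  assumes "hybrid_reach X D R y z"
  shows "\<exists>N t a x u. hybrid_traj X D R N t a x u \<and>
    y = (a 0, x 0 0, u 0 0) \<and> z = (a N, x N (t (Suc N)), u N (t (Suc N)))"
  using assms
proof induction
  case (arc c p q)
  then obtain T x u where "mode_traj X D c 0 T x u" "(x 0, u 0) = p" "(x T, u T) = q"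
    unfolding control_arc_def by blast
  with hybrid_traj_single[OF this(1), of R] show ?case
    by (intro exI[of _ 0] exI[of _ "\<lambda>j. if j = 0 then 0 else T"] exI[of _ "\<lambda>_. c"]
        exI[of _ "\<lambda>_. x"] exI[of _ "\<lambda>_. u"]) auto
next
  case (jump y z c p q)
  then obtain N t a x u where traj: "hybrid_traj X D R N t a x u"
    and y: "y = (a 0, x 0 0, u 0 0)" and z: "z = (a N, x N (t (Suc N)), u N (t (Suc N)))"
    by blast
  from jump.hyps(3) obtain S x' u' where piece: "mode_traj X D c 0 S x' u'"
    and "(x' 0, u' 0) = p" and "(x' S, u' S) = q"
    unfolding control_arc_def by blast
  define T where "T = t (Suc N)"
  have "mode_traj X D c T (S + T) (\<lambda>s. x' (s - T)) (\<lambda>s. u' (s - T))"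
    using mode_traj_shift[OF piece, of T] by simp
  moreover have "(c, x' (T - T), u' (T - T)) \<in> R z"
    using jump.hyps(2) \<open>(x' 0, u' 0) = p\<close> by simp
  ultimately have "hybrid_traj X D R (Suc N) (t(Suc (Suc N) := S + T)) (a(Suc N := c))
      (x(Suc N := \<lambda>s. x' (s - T))) (u(Suc N := \<lambda>s. u' (s - T)))"
    using hybrid_traj_snoc[OF traj] z unfolding T_def by simp
  moreover have "(c, q) = ((a(Suc N := c)) (Suc N), (x(Suc N := \<lambda>s. x' (s - T))) (Suc N)
      ((t(Suc (Suc N) := S + T)) (Suc (Suc N))), (u(Suc N := \<lambda>s. u' (s - T))) (Suc N)
      ((t(Suc (Suc N) := S + T)) (Suc (Suc N))))"
    using \<open>(x' S, u' S) = q\<close> by auto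
  moreover have "y = ((a(Suc N := c)) 0, (x(Suc N := \<lambda>s. x' (s - T))) 0 0,
      (u(Suc N := \<lambda>s. u' (s - T))) 0 0)"
    using y by simp
  ultimately show ?case by blast
qed

lemma hybrid_traj_joins_if_hybrid_reach:
  assumes "hybrid_reach X D R (c, p, v) (d, q, w)"
  shows "hybrid_traj_joins X D R (c, p) (d, q)"
proof -
  obtain N t a x u where "hybrid_traj X D R N t a x u"
    and "(c, p, v) = (a 0, x 0 0, u 0 0)" and "(d, q, w) = (a N, x N (t (Suc N)), u N (t (Suc N)))"
    using hybrid_reach_imp_hybrid_traj[OF assms] by blast
  then show ?thesis
    unfolding hybrid_traj_joins_def hybrid_traj_def
    by (intro exI[of _ N] exI[of _ t] exI[of _ a] exI[of _ x] exI[of _ u]) auto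
qed

section \<open>Two modes with a controllable hub\<close>

locale two_mode_hybrid_system =
  fixes X :: "'c \<Rightarrow> 'u \<Rightarrow> 'x::euclidean_space \<Rightarrow> 'x"
    and M :: "'c \<Rightarrow> 'x set"
    and U :: "'c \<Rightarrow> 'u set"
    and D :: "('c \<times> 'x \<times> 'u) set"
    and R :: "'c \<times> 'x \<times> 'u \<Rightarrow> ('c \<times> 'x \<times> 'u) set"
    and a b :: 'c
  assumes modes: "(UNIV :: 'c set) = {a, b}" and ab: "a \<noteq> b"
    and D_in_M: "\<And>c x v. (c, x, v) \<in> D \<Longrightarrow> x \<in> M c"
    and X_cont: "\<And>c v. v \<in> U c \<Longrightarrow> continuous_on (M c) (X c v)"
    and R_ran: "\<And>y. R y \<subseteq> D"
    and standing: "\<And>c x v. x \<in> tauE ` jump_set_mode D R c \<Longrightarrow> (c, x, v) \<in> D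
                     \<Longrightarrow> (c, x, v) \<in> jump_set_mode D R c"
    and G: "trans_graph D R = {(a, b), (b, a)}"
    and ctrl_a: "mode_controllable X D M a"
    and jumps_from_a_cover_M_b: "\<forall>ya \<in> jump_set_mode D R a.
               (\<Union>y \<in> R_to R b ya. reach_L X M U D b (tauE y)) = M b"
    and reach_L_meets_jump_set_b: "\<forall>y \<in> D. mode_of y = b \<longrightarrow>
               reach_L X M U D b (tauE y) \<inter> tauE ` jump_set_mode D R b \<noteq> {}"
begin

lemma jump_set_mode_a_nonempty: "jump_set_mode D R a \<noteq> {}"
proof -
  have "(a, b) \<in> trans_graph D R" using G by simp
  then obtain p q where "p \<in> D" "mode_of p = a" "q \<in> R p"
    unfolding trans_graph_def by auto
  then have "p \<in> jump_set_mode D R a"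
    unfolding jump_set_mode_def jump_set_def by auto
  then show ?thesis by blast
qed

lemma reach_L_jump_target:
  assumes "ya \<in> jump_set_mode D R a" and "q \<in> M b"
  obtains y1 y2 where "(b, y1, y2) \<in> R ya" and "q \<in> reach_L X M U D b y1"
proof -
  from assms jumps_from_a_cover_M_b
  obtain y where "y \<in> R_to R b ya" and "q \<in> reach_L X M U D b (tauE y)"
    by blast
  then show ?thesis
    using that by (cases y) (auto simp: R_to_def mode_of_def tauE_def)
qed

lemma exists_control_in_D:
  assumes "p \<in> M c"
  obtains w where "(c, p, w) \<in> D"
proof (cases "c = a")
  case True
  then obtain u v where "control_arc X D a (p, u) (p, v)"
    using control_arc_if_mode_controllable[OF ctrl_a] assms by blast
  then have "(a, p, u) \<in> D" by (rule control_arc_in_D(1))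
  with that True show ?thesis by blast
next
  case False
  then have "c = b" using modes by auto
  obtain ya where "ya \<in> jump_set_mode D R a" using jump_set_mode_a_nonempty by blast
  then obtain y1 y2 where "p \<in> reach_L X M U D b y1"
    using reach_L_jump_target assms \<open>c = b\<close> by blast
  then obtain u v where "control_arc X D b (y1, u) (p, v)"
    using control_arc_if_reach_L[of U b M X, OF X_cont] by blast
  then have "(b, p, v) \<in> D" by (rule control_arc_in_D(2))
  with that \<open>c = b\<close> show ?thesis by blast
qed

lemma hybrid_reach_from_mode_a:
  assumes start: "(a, x, w) \<in> D" and "q \<in> M d"
  shows "\<exists>v. hybrid_reach X D R (a, x, w) (d, q, v)"
proof (cases "d = a")
  case True
  obtain u v where "control_arc X D a (x, u) (q, v)"
    using control_arc_if_mode_controllable[OF ctrl_a D_in_M[OF start]] \<open>q \<in> M d\<close> True by blast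
  then have "control_arc X D a (x, w) (q, v)" using start by (rule control_arc_update_start)
  then show ?thesis using True by (blast intro: hybrid_reach.arc)
next
  case False
  then have "d = b" using modes by auto
  obtain ya where ya: "ya \<in> jump_set_mode D R a" using jump_set_mode_a_nonempty by blast
  obtain \<xi> \<omega> where ya_eq: "ya = (a, \<xi>, \<omega>)"
    using ya by (cases ya) (simp add: jump_set_mode_def mode_of_def)
  have "(a, \<xi>, \<omega>) \<in> D" using ya ya_eq by (simp add: jump_set_mode_def jump_set_def)
  then obtain u v where arc: "control_arc X D a (x, u) (\<xi>, v)"
    using control_arc_if_mode_controllable[OF ctrl_a D_in_M[OF start] D_in_M] by blast
  then have "control_arc X D a (x, w) (\<xi>, v)" using start by (rule control_arc_update_start)
  then have to_jump: "hybrid_reach X D R (a, x, w) (a, \<xi>, v)" by (rule hybrid_reach.arc)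
  have "\<xi> = tauE ya" by (simp add: ya_eq tauE_def)
  with ya have "\<xi> \<in> tauE ` jump_set_mode D R a" by blast
  from standing[OF this control_arc_in_D(2)[OF arc]]
  obtain y1 y2 where jump: "(b, y1, y2) \<in> R (a, \<xi>, v)" and "q \<in> reach_L X M U D b y1"
    using reach_L_jump_target \<open>q \<in> M d\<close> \<open>d = b\<close> by blast
  then obtain u' v' where "control_arc X D b (y1, u') (q, v')"
    using control_arc_if_reach_L[of U b M X, OF X_cont] by blast
  moreover have "(b, y1, y2) \<in> D" using jump R_ran by blast
  ultimately have "control_arc X D b (y1, y2) (q, v')"
    by (rule control_arc_update_start)
  with to_jump jump have "hybrid_reach X D R (a, x, w) (b, q, v')"
    by (rule hybrid_reach.jump)
  then show ?thesis using \<open>d = b\<close> by blast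
qed

lemma hybrid_reach_jump_to_mode_a:
  assumes "p \<in> M b"
  obtains w z r
  where "hybrid_reach X D R (b, p, w) z" and "r \<in> R z" and "r \<in> D" and "mode_of r = a"
proof -
  obtain w0 where "(b, p, w0) \<in> D" using exists_control_in_D assms by blast
  from bspec[OF reach_L_meets_jump_set_b this]
  have "reach_L X M U D b p \<inter> tauE ` jump_set_mode D R b \<noteq> {}"
    by (simp add: tauE_def mode_of_def)
  then obtain z' where "z' \<in> reach_L X M U D b p" and "z' \<in> tauE ` jump_set_mode D R b"
    by blast
  then obtain w v where arc: "control_arc X D b (p, w) (z', v)"
    using control_arc_if_reach_L[of U b M X, OF X_cont] by blast
  have "(b, z', v) \<in> jump_set_mode D R b"
    using standing[OF \<open>z' \<in> tauE ` _\<close> control_arc_in_D(2)[OF arc]] .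
  then obtain r where "r \<in> R (b, z', v)" and "(b, z', v) \<in> D"
    unfolding jump_set_mode_def jump_set_def by blast
  moreover have "r \<in> D" using \<open>r \<in> R _\<close> R_ran by blast
  ultimately have "(mode_of (b, z', v), mode_of r) \<in> trans_graph D R"
    by (intro trans_graphI)
  then have "(b, mode_of r) \<in> trans_graph D R" by (simp add: mode_of_def)
  then have "mode_of r = a" using G ab by auto
  with that hybrid_reach.arc[OF arc] \<open>r \<in> R _\<close> \<open>r \<in> D\<close> show ?thesis by blast
qed

end

theorem theorem4p8:
  fixes X :: "'c \<Rightarrow> 'u \<Rightarrow> 'x::euclidean_space \<Rightarrow> 'x"
    and M :: "'c \<Rightarrow> 'x set"
    and U :: "'c \<Rightarrow> 'u set"
    and D :: "('c \<times> 'x \<times> 'u) set"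
    and R :: "'c \<times> 'x \<times> 'u \<Rightarrow> ('c \<times> 'x \<times> 'u) set"
    and a b :: 'c
  assumes modes: "(UNIV :: 'c set) = {a, b}" and ab: "a \<noteq> b"
    and D_sub: "\<And>c x v. (c, x, v) \<in> D \<Longrightarrow> x \<in> M c \<and> v \<in> U c"
    and X_cont: "\<And>c v. v \<in> U c \<Longrightarrow> continuous_on (M c) (X c v)"
    and R_dom: "\<And>y. y \<notin> D \<Longrightarrow> R y = {}"
    and R_ran: "\<And>y. R y \<subseteq> D"
    and standing: "\<And>c x v. x \<in> tauE ` jump_set_mode D R c \<Longrightarrow> (c, x, v) \<in> D
                     \<Longrightarrow> (c, x, v) \<in> jump_set_mode D R c"
    and G: "trans_graph D R = {(a, b), (b, a)}"
    and disc: "discrete_controllable UNIV (trans_graph D R)"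
    and ctrl_a: "mode_controllable X D M a"
    and H1: "\<forall>ya \<in> jump_set_mode D R a.
               (\<Union>y \<in> R_to R b ya. reach_L X M U D b (tauE y)) = M b"
    and H2: "\<forall>y \<in> D. mode_of y = b \<longrightarrow>
               reach_L X M U D b (tauE y) \<inter> tauE ` jump_set_mode D R b \<noteq> {}"
  shows "globally_controllable X M D R"
proof -
  interpret two_mode_hybrid_system X M U D R a b
    by unfold_locales (use modes ab D_sub X_cont R_ran standing G ctrl_a H1 H2 in blast)+
  show ?thesis
    unfolding globally_controllable_def
  proof (intro allI impI)
    fix c p d q assume "p \<in> M c" and "q \<in> M d"
    show "hybrid_traj_joins X D R (c, p) (d, q)"
    proof (cases "c = a")
      case True
      obtain w where "(a, p, w) \<in> D" using exists_control_in_D \<open>p \<in> M c\<close> True by blast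
      then obtain v where "hybrid_reach X D R (a, p, w) (d, q, v)"
        using hybrid_reach_from_mode_a \<open>q \<in> M d\<close> by blast
      then show ?thesis using True by (simp add: hybrid_traj_joins_if_hybrid_reach)
    next
      case False
      then have "c = b" using modes by auto
      obtain w z r where to_a: "hybrid_reach X D R (b, p, w) z"
        and "r \<in> R z" "r \<in> D" "mode_of r = a"
        using hybrid_reach_jump_to_mode_a \<open>p \<in> M c\<close> \<open>c = b\<close> by blast
      obtain x u where "r = (a, x, u)"
        using \<open>mode_of r = a\<close> by (cases r) (simp add: mode_of_def)
      with \<open>r \<in> D\<close> obtain v where "hybrid_reach X D R r (d, q, v)"
        using hybrid_reach_from_mode_a \<open>q \<in> M d\<close> by blast
      from hybrid_reach_jump_trans[OF this to_a \<open>r \<in> R z\<close>] show ?thesis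
        using \<open>c = b\<close> by (simp add: hybrid_traj_joins_if_hybrid_reach)
    qed
  qed
qed


end
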